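(* For every term $M$ of the distant Bang calculus $\mathtt{dBang}$, the set $\mathcal A(M)$ of Böhm approximants of $M$ is an ideal for the order $\sqsubseteq$, i.e. it is downward closed among approximants and directed: for all $A_1,A_2\in\mathcal A(M)$ there is $A_3\in\mathcal A(M)$ with $A_1\sqsubseteq A_3$ and $A_2\sqsubseteq A_3$.
   Context: \textbf{dBang.} Terms: $M,N ::= x \mid \lambda x.M \mid MN \mid M[N/x] \mid\ !M \mid \mathrm{der}\,M$, where $M[N/x]$ is an explicit substitution binding $x$ in $M$; terms up to $\alpha$-conversion, $M\{N/x\}$ capture-avoiding substitution. List contexts: $L ::= \square \mid L[N/x]$. Root rules: $L\langle\lambda x.M\rangle N \mapsto L\langle M[N/x]\rangle$; $M[L\langle !N\rangle/x]\mapsto L\langle M\{N/x\}\rangle$; $\mathrm{der}(L\langle !N\rangle)\mapsto L\langle N\rangle$. Full reduction $\to$ is their closure under arbitrary contexts. \textbf{Approximants.} Extend the syntax with a constant $\bot$. $A\sqsubseteq B$ means $A$ is obtained from $B$ by replacing some subterms by $\bot$. An approximant is a term of the extended syntax with no subterm of any of the forms $L\langle\lambda x.A\rangle B$, $L\langle\bot\rangle B$, $\mathrm{der}(L\langle !A\rangle)$, $\mathrm{der}(L\langle\bot\rangle)$, $A[L\langle !B\rangle/x]$, $A[L\langle\bot\rangle/x]$. $\mathcal A(M)=\{A\text{ approximant}\mid\exists N,\ M\to^*N,\ A\sqsubseteq N\}$. *)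

theory Defs
  imports Main
begin

text \<open>Terms of dBang extended with the constant Bot, in locally nameless / de Bruijn
style (terms up to alpha-conversion). ES t u represents t[u/x], binding index 0 in t.\<close>

datatype trm =
    Var nat
  | Lam trm
  | App trm trm
  | ES trm trm
  | Bang trm
  | Der trm
  | Bot

fun bot_free :: "trm \<Rightarrow> bool" where
  "bot_free (Var i) = True"
| "bot_free (Lam t) = bot_free t"
| "bot_free (App t u) = (bot_free t \<and> bot_free u)"
| "bot_free (ES t u) = (bot_free t \<and> bot_free u)"
| "bot_free (Bang t) = bot_free t"
| "bot_free (Der t) = bot_free t"
| "bot_free Bot = False"

fun lift :: "nat \<Rightarrow> nat \<Rightarrow> trm \<Rightarrow> trm" where
  "lift n k (Var i) = (if i < k then Var i else Var (i + n))"
| "lift n k (Lam t) = Lam (lift n (Suc k) t)"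
| "lift n k (App t u) = App (lift n k t) (lift n k u)"
| "lift n k (ES t u) = ES (lift n (Suc k) t) (lift n k u)"
| "lift n k (Bang t) = Bang (lift n k t)"
| "lift n k (Der t) = Der (lift n k t)"
| "lift n k Bot = Bot"

fun subst :: "trm \<Rightarrow> nat \<Rightarrow> trm \<Rightarrow> trm" where
  "subst (Var i) k s = (if i < k then Var i else if i = k then s else Var (i - 1))"
| "subst (Lam t) k s = Lam (subst t (Suc k) (lift 1 0 s))"
| "subst (App t u) k s = App (subst t k s) (subst u k s)"
| "subst (ES t u) k s = ES (subst t (Suc k) (lift 1 0 s)) (subst u k s)"
| "subst (Bang t) k s = Bang (subst t k s)"
| "subst (Der t) k s = Der (subst t k s)"
| "subst Bot k s = Bot"

text \<open>List contexts L ::= \<box> | L[N/x]; a list [N1,...,Nk] denotes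
(\<dots>(\<box>[Nk/xk])\<dots>)[N1/x1], i.e. plug (N # L) P = (plug L P)[N/x].\<close>
fun plug :: "trm list \<Rightarrow> trm \<Rightarrow> trm" where
  "plug [] P = P"
| "plug (N # L) P = ES (plug L P) N"

inductive root_step :: "trm \<Rightarrow> trm \<Rightarrow> bool" where
  dB:  "root_step (App (plug L (Lam M)) N) (plug L (ES M (lift (length L) 0 N)))"
| sbang: "root_step (ES M (plug L (Bang N))) (plug L (subst (lift (length L) 1 M) 0 N))"
| dbang: "root_step (Der (plug L (Bang N))) (plug L N)"

inductive step :: "trm \<Rightarrow> trm \<Rightarrow> bool" where
  root: "root_step t u \<Longrightarrow> step t u"
| lam: "step t u \<Longrightarrow> step (Lam t) (Lam u)"
| appL: "step t u \<Longrightarrow> step (App t s) (App u s)"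
| appR: "step t u \<Longrightarrow> step (App s t) (App s u)"
| esL: "step t u \<Longrightarrow> step (ES t s) (ES u s)"
| esR: "step t u \<Longrightarrow> step (ES s t) (ES s u)"
| bang: "step t u \<Longrightarrow> step (Bang t) (Bang u)"
| der: "step t u \<Longrightarrow> step (Der t) (Der u)"

inductive approx_le :: "trm \<Rightarrow> trm \<Rightarrow> bool" (infix "\<sqsubseteq>" 50) where
  bot: "Bot \<sqsubseteq> B"
| var: "Var i \<sqsubseteq> Var i"
| lam: "A \<sqsubseteq> B \<Longrightarrow> Lam A \<sqsubseteq> Lam B"
| app: "A \<sqsubseteq> B \<Longrightarrow> A' \<sqsubseteq> B' \<Longrightarrow> App A A' \<sqsubseteq> App B B'"
| es: "A \<sqsubseteq> B \<Longrightarrow> A' \<sqsubseteq> B' \<Longrightarrow> ES A A' \<sqsubseteq> ES B B'"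
| bang: "A \<sqsubseteq> B \<Longrightarrow> Bang A \<sqsubseteq> Bang B"
| der: "A \<sqsubseteq> B \<Longrightarrow> Der A \<sqsubseteq> Der B"

fun subterms :: "trm \<Rightarrow> trm set" where
  "subterms (Var i) = {Var i}"
| "subterms (Lam t) = insert (Lam t) (subterms t)"
| "subterms (App t u) = insert (App t u) (subterms t \<union> subterms u)"
| "subterms (ES t u) = insert (ES t u) (subterms t \<union> subterms u)"
| "subterms (Bang t) = insert (Bang t) (subterms t)"
| "subterms (Der t) = insert (Der t) (subterms t)"
| "subterms Bot = {Bot}"

definition forbidden :: "trm \<Rightarrow> bool" where
  "forbidden S \<longleftrightarrow>
     (\<exists>L A B. S = App (plug L (Lam A)) B) \<or>
     (\<exists>L B. S = App (plug L Bot) B) \<or>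
     (\<exists>L A. S = Der (plug L (Bang A))) \<or>
     (\<exists>L. S = Der (plug L Bot)) \<or>
     (\<exists>L A B. S = ES A (plug L (Bang B))) \<or>
     (\<exists>L A. S = ES A (plug L Bot))"

definition approximant :: "trm \<Rightarrow> bool" where
  "approximant A \<longleftrightarrow> (\<forall>S \<in> subterms A. \<not> forbidden S)"

definition approximants :: "trm \<Rightarrow> trm set" ("\<A>") where
  "\<A> M = {A. approximant A \<and> (\<exists>N. step\<^sup>*\<^sup>* M N \<and> A \<sqsubseteq> N)}"

end

theory Submission
  imports Defs "HOL-Library.Confluence"
begin

text \<open>Full reduction is confluent: parallel reduction, in which a redex may fire across a
list context, has Takahashi's triangle property with respect to the complete development
\<open>dev\<close>. The only approximant below a redex is \<open>Bot\<close>, so an approximant below \<open>N\<close> lies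
below every reduct of \<open>N\<close>. Hence two approximants of \<open>M\<close> lie below a common reduct, and so
does their join, which is again an approximant because joining never turns a non-forbidden
node into a forbidden one.\<close>

section \<open>Lifting and substitution\<close>

lemma lift_0 [simp]: "lift 0 k t = t"
  by (induction t arbitrary: k) auto

lemma lift_lift_merge:
  "i \<le> k \<Longrightarrow> k \<le> i + m \<Longrightarrow> lift n k (lift m i t) = lift (n + m) i t"
  by (induction t arbitrary: i k) auto

lemma lift_lift [simp]: "lift n k (lift m k t) = lift (n + m) k t"
  by (simp add: lift_lift_merge)

lemma lift_lift_comm:
  "i \<le> k \<Longrightarrow> lift n i (lift m k t) = lift m (k + n) (lift n i t)"
  by (induction t arbitrary: i k) auto

lemma subst_lift_cancel:
  "k \<le> j \<Longrightarrow> j \<le> k + n \<Longrightarrow> subst (lift (Suc n) k t) j s = lift n k t"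
  by (induction t arbitrary: k j s) auto

lemma lift_subst_high:
  "k \<le> i \<Longrightarrow> lift n i (subst t k s) = subst (lift n (Suc i) t) k (lift n i s)"
  by (induction t arbitrary: i k s) (auto simp: lift_lift_comm)

lemma lift_subst_low:
  "i \<le> k \<Longrightarrow> lift n i (subst t k s) = subst (lift n i t) (k + n) (lift n i s)"
  by (induction t arbitrary: i k s) (auto simp: lift_lift_comm)

lemma subst_subst:
  "i \<le> j \<Longrightarrow>
   subst (subst t i u) j v = subst (subst t (Suc j) (lift 1 i v)) i (subst u j v)"
  by (induction t arbitrary: i j u v)
    (auto simp: subst_lift_cancel lift_lift_comm[of 0 _ 1 1, simplified]
      lift_subst_low[of 0 _ 1, simplified])

section \<open>Confluence via parallel reduction\<close>

fun lift_ctx :: "nat \<Rightarrow> nat \<Rightarrow> trm list \<Rightarrow> trm list" where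
  "lift_ctx n k [] = []"
| "lift_ctx n k (N # L) = lift n k N # lift_ctx n (Suc k) L"

fun subst_ctx :: "trm list \<Rightarrow> nat \<Rightarrow> trm \<Rightarrow> trm list" where
  "subst_ctx [] k s = []"
| "subst_ctx (N # L) k s = subst N k s # subst_ctx L (Suc k) (lift 1 0 s)"

lemma length_lift_ctx [simp]: "length (lift_ctx n k L) = length L"
  by (induction L arbitrary: k) auto

lemma length_subst_ctx [simp]: "length (subst_ctx L k s) = length L"
  by (induction L arbitrary: k s) auto

lemma plug_append: "plug (L1 @ L2) H = plug L1 (plug L2 H)"
  by (induction L1) auto

lemma lift_plug: "lift n k (plug L H) = plug (lift_ctx n k L) (lift n (k + length L) H)"
  by (induction L arbitrary: k) auto

lemma subst_plug:
  "subst (plug L H) k s = plug (subst_ctx L k s) (subst H (k + length L) (lift (length L) 0 s))"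
  by (induction L arbitrary: k s) auto

lemma subst_lift_plug:
  "subst (lift n (Suc k) (plug L H)) k Q =
   plug (subst_ctx (lift_ctx n (Suc k) L) k Q)
     (subst (lift n (Suc k + length L) H) (k + length L) (lift (length L) 0 Q))"
  by (simp add: lift_plug subst_plug)

text \<open>In the redex rules the function part, resp. the substituted term, need only reduce to an
abstraction, resp. a box, under a list context: a redex created within the same parallel step
may fire, as is needed for the complete development \<open>dev\<close> below to be a reduct of every
parallel reduct.\<close>

inductive par :: "trm \<Rightarrow> trm \<Rightarrow> bool" (infix "\<Rrightarrow>" 50) where
  pvar: "Var i \<Rrightarrow> Var i"
| pbot: "Bot \<Rrightarrow> Bot"
| plam: "t \<Rrightarrow> t' \<Longrightarrow> Lam t \<Rrightarrow> Lam t'"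
| papp: "t \<Rrightarrow> t' \<Longrightarrow> u \<Rrightarrow> u' \<Longrightarrow> App t u \<Rrightarrow> App t' u'"
| pes: "t \<Rrightarrow> t' \<Longrightarrow> u \<Rrightarrow> u' \<Longrightarrow> ES t u \<Rrightarrow> ES t' u'"
| pbang: "t \<Rrightarrow> t' \<Longrightarrow> Bang t \<Rrightarrow> Bang t'"
| pder: "t \<Rrightarrow> t' \<Longrightarrow> Der t \<Rrightarrow> Der t'"
| pdB: "t \<Rrightarrow> plug L (Lam M) \<Longrightarrow> u \<Rrightarrow> u' \<Longrightarrow> App t u \<Rrightarrow> plug L (ES M (lift (length L) 0 u'))"
| psb: "t \<Rrightarrow> plug L (Bang N) \<Longrightarrow> M \<Rrightarrow> M' \<Longrightarrow> ES M t \<Rrightarrow> plug L (subst (lift (length L) 1 M') 0 N)"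
| pd: "t \<Rrightarrow> plug L (Bang N) \<Longrightarrow> Der t \<Rrightarrow> plug L N"

lemma par_refl [simp]: "t \<Rrightarrow> t"
  by (induction t) (auto intro: par.intros)

lemma par_lift: "t \<Rrightarrow> t' \<Longrightarrow> lift n k t \<Rrightarrow> lift n k t'"
proof (induction arbitrary: k rule: par.induct)
  case (pdB t L M u u')
  let ?L = "lift_ctx n k L" and ?M = "lift n (Suc (k + length L)) M"
  have "lift n k t \<Rrightarrow> plug ?L (Lam ?M)"
    using pdB.IH(1)[of k] by (simp add: lift_plug)
  from par.pdB[OF this pdB.IH(2)[of k]]
  have "App (lift n k t) (lift n k u) \<Rrightarrow> plug ?L (ES ?M (lift (length L) 0 (lift n k u')))"
    by simp
  moreover have "lift n (k + length L) (lift (length L) 0 u') = lift (length L) 0 (lift n k u')"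
    using lift_lift_comm[of 0 k "length L" n u'] by simp
  ultimately show ?case by (simp add: lift_plug)
next
  case (psb t L N M M')
  let ?L = "lift_ctx n k L" and ?N = "lift n (k + length L) N"
  have "lift n k t \<Rrightarrow> plug ?L (Bang ?N)"
    using psb.IH(1)[of k] by (simp add: lift_plug)
  from par.psb[OF this psb.IH(2)[of "Suc k"]]
  have "ES (lift n (Suc k) M) (lift n k t) \<Rrightarrow>
      plug ?L (subst (lift (length L) 1 (lift n (Suc k) M')) 0 ?N)"
    by simp
  moreover have "lift n (k + length L) (subst (lift (length L) 1 M') 0 N)
     = subst (lift n (Suc (k + length L)) (lift (length L) 1 M')) 0 ?N"
    by (rule lift_subst_high) simp
  moreover have
    "lift n (Suc (k + length L)) (lift (length L) 1 M') = lift (length L) 1 (lift n (Suc k) M')"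
    using lift_lift_comm[of 1 "Suc k" "length L" n M'] by simp
  ultimately show ?case by (simp add: lift_plug)
next
  case (pd t L N)
  then show ?case by (simp add: lift_plug) (metis lift_plug par.pd)
qed (auto intro: par.intros)

lemma par_subst: "t \<Rrightarrow> t' \<Longrightarrow> s \<Rrightarrow> s' \<Longrightarrow> subst t k s \<Rrightarrow> subst t' k s'"
proof (induction arbitrary: k s s' rule: par.induct)
  case (plam t t')
  show ?case using plam.IH[OF par_lift[OF plam.prems]] by (simp add: par.plam)
next
  case (pes t t' u u')
  show ?case
    using pes.IH(1)[OF par_lift[OF pes.prems]] pes.IH(2)[OF pes.prems] by (simp add: par.pes)
next
  case (pdB t L M u u')
  let ?L = "subst_ctx L k s'" and ?M = "subst M (Suc (k + length L)) (lift (Suc (length L)) 0 s')"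
  have "subst t k s \<Rrightarrow> plug ?L (Lam ?M)"
    using pdB.IH(1)[OF pdB.prems, of k] by (simp add: subst_plug)
  from par.pdB[OF this pdB.IH(2)[OF pdB.prems, of k]]
  have "App (subst t k s) (subst u k s) \<Rrightarrow> plug ?L (ES ?M (lift (length L) 0 (subst u' k s')))"
    by simp
  moreover have
    "subst (lift (length L) 0 u') (k + length L) (lift (length L) 0 s') = lift (length L) 0 (subst u' k s')"
    using lift_subst_low[of 0 k "length L" u' s'] by simp
  ultimately show ?case by (simp add: subst_plug)
next
  case (psb t L N M M')
  let ?L = "subst_ctx L k s'" and ?s = "lift (length L) 0 s'"
  let ?N = "subst N (k + length L) ?s"
  have "subst t k s \<Rrightarrow> plug ?L (Bang ?N)"
    using psb.IH(1)[OF psb.prems, of k] by (simp add: subst_plug)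
  from par.psb[OF this psb.IH(2)[OF par_lift[OF psb.prems], of "Suc k" 1 0]]
  have "ES (subst M (Suc k) (lift 1 0 s)) (subst t k s) \<Rrightarrow>
      plug ?L (subst (lift (length L) 1 (subst M' (Suc k) (lift 1 0 s'))) 0 ?N)"
    by simp
  moreover have "subst (subst (lift (length L) 1 M') 0 N) (k + length L) ?s
     = subst (subst (lift (length L) 1 M') (Suc (k + length L)) (lift 1 0 ?s)) 0 ?N"
    by (rule subst_subst) simp
  moreover have "lift 1 0 ?s = lift (length L) 1 (lift 1 0 s')"
    using lift_lift_merge[of 0 1 1 "length L" s'] by simp
  moreover have "lift (length L) 1 (subst M' (Suc k) (lift 1 0 s')) =
      subst (lift (length L) 1 M') (Suc k + length L) (lift (length L) 1 (lift 1 0 s'))"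
    by (rule lift_subst_low) simp
  ultimately show ?case by (simp add: subst_plug)
next
  case (pd t L N)
  then show ?case by (simp add: subst_plug) (metis subst_plug par.pd)
qed (auto intro: par.intros)

inductive_cases par_LamE: "Lam M \<Rrightarrow> w"
inductive_cases par_BangE: "Bang M \<Rrightarrow> w"
inductive_cases par_ESE: "ES t u \<Rrightarrow> w"

lemma par_ES_cases:
  assumes "ES t u \<Rrightarrow> w"
  obtains (pes) t' u' where "w = ES t' u'" "t \<Rrightarrow> t'" "u \<Rrightarrow> u'"
    | (psb) L N t' where "u \<Rrightarrow> plug L (Bang N)" "t \<Rrightarrow> t'"
        "w = plug L (subst (lift (length L) 1 t') 0 N)"
  using assms by (cases rule: par_ESE) auto

lemma par_plug_Lam:
  "plug L (Lam M) \<Rrightarrow> w \<Longrightarrow> \<exists>L2 M2. w = plug L2 (Lam M2) \<and>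
     (\<forall>X X'. X \<Rrightarrow> X' \<longrightarrow>
        plug L (ES M (lift (length L) 0 X)) \<Rrightarrow> plug L2 (ES M2 (lift (length L2) 0 X')))"
proof (induction L arbitrary: w)
  case Nil
  then show ?case by (auto elim!: par_LamE intro!: exI[of _ "[]"] par.pes)
next
  case (Cons N L0)
  from Cons.prems have "ES (plug L0 (Lam M)) N \<Rrightarrow> w" by simp
  then show ?case
  proof (cases rule: par_ES_cases)
    case (pes w0 N')
    from Cons.IH[OF pes(2)] obtain L2 M2 where w0: "w0 = plug L2 (Lam M2)"
      and IH: "\<And>X X'. X \<Rrightarrow> X' \<Longrightarrow>
        plug L0 (ES M (lift (length L0) 0 X)) \<Rrightarrow> plug L2 (ES M2 (lift (length L2) 0 X'))"
      by blast
    show ?thesis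
    proof (intro exI conjI allI impI)
      show "w = plug (N' # L2) (Lam M2)" using pes(1) w0 by simp
      fix X X' assume "X \<Rrightarrow> X'"
      from IH[OF par_lift[OF this, of 1 0]]
      show "plug (N # L0) (ES M (lift (length (N # L0)) 0 X)) \<Rrightarrow>
          plug (N' # L2) (ES M2 (lift (length (N' # L2)) 0 X'))"
        using pes(3) by (simp add: par.pes)
    qed
  next
    case (psb L3 Q M0')
    from Cons.IH[OF psb(2)] obtain L2 M2 where M0': "M0' = plug L2 (Lam M2)"
      and IH: "\<And>X X'. X \<Rrightarrow> X' \<Longrightarrow>
        plug L0 (ES M (lift (length L0) 0 X)) \<Rrightarrow> plug L2 (ES M2 (lift (length L2) 0 X'))"
      by blast
    \<comment> \<open>substituting \<open>Q\<close> into \<open>plug L2 (Lam M2)\<close> distributes over \<open>L2\<close>\<close>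
    define n m where "n = length L3" and "m = length L2"
    define Lq where "Lq = subst_ctx (lift_ctx n 1 L2) 0 Q"
    define M2' where "M2' = subst (lift n (Suc (Suc m)) M2) (Suc m) (lift (Suc m) 0 Q)"
    show ?thesis
    proof (intro exI conjI allI impI)
      show "w = plug (L3 @ Lq) (Lam M2')"
        using psb(3) M0' by (simp add: subst_lift_plug plug_append Lq_def M2'_def n_def m_def)
      fix X X' assume "X \<Rrightarrow> X'"
      from par.psb[OF psb(1) IH[OF par_lift[OF this, of 1 0]]]
      show "plug (N # L0) (ES M (lift (length (N # L0)) 0 X)) \<Rrightarrow>
          plug (L3 @ Lq) (ES M2' (lift (length (L3 @ Lq)) 0 X'))"
        by (simp add: subst_lift_plug plug_append Lq_def M2'_def n_def m_def add.commute
            lift_lift_merge subst_lift_cancel)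
    qed
  qed
qed

lemma par_plug_Bang:
  "plug L (Bang P) \<Rrightarrow> w \<Longrightarrow> \<exists>L2 P2. w = plug L2 (Bang P2) \<and> plug L P \<Rrightarrow> plug L2 P2 \<and>
     (\<forall>X X'. X \<Rrightarrow> X' \<longrightarrow>
        plug L (subst (lift (length L) 1 X) 0 P) \<Rrightarrow> plug L2 (subst (lift (length L2) 1 X') 0 P2))"
proof (induction L arbitrary: w)
  case Nil
  then show ?case by (auto elim!: par_BangE intro!: exI[of _ "[]"] par_subst)
next
  case (Cons N L0)
  from Cons.prems have "ES (plug L0 (Bang P)) N \<Rrightarrow> w" by simp
  then show ?case
  proof (cases rule: par_ES_cases)
    case (pes w0 N')
    from Cons.IH[OF pes(2)] obtain L2 P2 where w0: "w0 = plug L2 (Bang P2)"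
      and P: "plug L0 P \<Rrightarrow> plug L2 P2"
      and IH: "\<And>X X'. X \<Rrightarrow> X' \<Longrightarrow>
        plug L0 (subst (lift (length L0) 1 X) 0 P) \<Rrightarrow> plug L2 (subst (lift (length L2) 1 X') 0 P2)"
      by blast
    show ?thesis
    proof (intro exI conjI allI impI)
      show "w = plug (N' # L2) (Bang P2)" using pes(1) w0 by simp
      show "plug (N # L0) P \<Rrightarrow> plug (N' # L2) P2" using P pes(3) by (simp add: par.pes)
      fix X X' assume "X \<Rrightarrow> X'"
      from IH[OF par_lift[OF this, of 1 1]]
      show "plug (N # L0) (subst (lift (length (N # L0)) 1 X) 0 P) \<Rrightarrow>
          plug (N' # L2) (subst (lift (length (N' # L2)) 1 X') 0 P2)"
        using pes(3) by (simp add: par.pes)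
    qed
  next
    case (psb L3 Q M0')
    from Cons.IH[OF psb(2)] obtain L2 P2 where M0': "M0' = plug L2 (Bang P2)"
      and P: "plug L0 P \<Rrightarrow> plug L2 P2"
      and IH: "\<And>X X'. X \<Rrightarrow> X' \<Longrightarrow>
        plug L0 (subst (lift (length L0) 1 X) 0 P) \<Rrightarrow> plug L2 (subst (lift (length L2) 1 X') 0 P2)"
      by blast
    define n m where "n = length L3" and "m = length L2"
    define Lq where "Lq = subst_ctx (lift_ctx n 1 L2) 0 Q"
    define P2' where "P2' = subst (lift n (Suc m) P2) m (lift m 0 Q)"
    show ?thesis
    proof (intro exI conjI allI impI)
      show "w = plug (L3 @ Lq) (Bang P2')"
        using psb(3) M0' by (simp add: subst_lift_plug plug_append Lq_def P2'_def n_def m_def)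
      show "plug (N # L0) P \<Rrightarrow> plug (L3 @ Lq) P2'"
        using par.psb[OF psb(1) P]
        by (simp add: subst_lift_plug plug_append Lq_def P2'_def n_def m_def)
      fix X X' assume "X \<Rrightarrow> X'"
      from par.psb[OF psb(1) IH[OF par_lift[OF this, of 1 1]]]
      have "ES (plug L0 (subst (lift (Suc (length L0)) 1 X) 0 P)) N \<Rrightarrow>
            plug L3 (subst (lift n 1 (plug L2 (subst (lift (Suc m) 1 X') 0 P2))) 0 Q)"
        by (simp add: n_def m_def)
      moreover have "subst (subst (lift (n + Suc m) 1 X') 0 (lift n (Suc m) P2)) m (lift m 0 Q)
          = subst (lift (n + m) 1 X') 0 P2'"
        unfolding P2'_def by (subst subst_subst) (simp_all add: subst_lift_cancel)
      ultimately show "plug (N # L0) (subst (lift (length (N # L0)) 1 X) 0 P) \<Rrightarrow>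
          plug (L3 @ Lq) (subst (lift (length (L3 @ Lq)) 1 X') 0 P2')"
        by (simp add: subst_lift_plug plug_append Lq_def n_def m_def add.commute
            lift_subst_high lift_lift_merge)
    qed
  qed
qed

fun dest_plug_Lam :: "trm \<Rightarrow> (trm list \<times> trm) option" where
  "dest_plug_Lam (Lam M) = Some ([], M)"
| "dest_plug_Lam (ES t u) = map_option (\<lambda>(L, M). (u # L, M)) (dest_plug_Lam t)"
| "dest_plug_Lam _ = None"

fun dest_plug_Bang :: "trm \<Rightarrow> (trm list \<times> trm) option" where
  "dest_plug_Bang (Bang M) = Some ([], M)"
| "dest_plug_Bang (ES t u) = map_option (\<lambda>(L, M). (u # L, M)) (dest_plug_Bang t)"
| "dest_plug_Bang _ = None"

lemma dest_plug_Lam_plug [simp]: "dest_plug_Lam (plug L (Lam M)) = Some (L, M)"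
  by (induction L) auto

lemma dest_plug_Bang_plug [simp]: "dest_plug_Bang (plug L (Bang M)) = Some (L, M)"
  by (induction L) auto

lemma dest_plug_Lam_Some: "dest_plug_Lam X = Some (L, M) \<Longrightarrow> X = plug L (Lam M)"
  by (induction X arbitrary: L) (auto split: option.splits)

lemma dest_plug_Bang_Some: "dest_plug_Bang X = Some (L, M) \<Longrightarrow> X = plug L (Bang M)"
  by (induction X arbitrary: L) (auto split: option.splits)

fun dev :: "trm \<Rightarrow> trm" where
  "dev (Var i) = Var i"
| "dev Bot = Bot"
| "dev (Lam t) = Lam (dev t)"
| "dev (App t u) =
    (case dest_plug_Lam (dev t) of
      Some (L, M) \<Rightarrow> plug L (ES M (lift (length L) 0 (dev u)))
    | None \<Rightarrow> App (dev t) (dev u))"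
| "dev (ES t u) =
    (case dest_plug_Bang (dev u) of
      Some (L, N) \<Rightarrow> plug L (subst (lift (length L) 1 (dev t)) 0 N)
    | None \<Rightarrow> ES (dev t) (dev u))"
| "dev (Bang t) = Bang (dev t)"
| "dev (Der t) = (case dest_plug_Bang (dev t) of Some (L, N) \<Rightarrow> plug L N | None \<Rightarrow> Der (dev t))"

lemma par_dev: "t \<Rrightarrow> u \<Longrightarrow> u \<Rrightarrow> dev t"
proof (induction rule: par.induct)
  case (papp t t' u u')
  then show ?case
    by (auto split: option.split dest!: dest_plug_Lam_Some intro: par.papp par.pdB)
next
  case (pes t t' u u')
  then show ?case
    by (auto split: option.split dest!: dest_plug_Bang_Some
        intro: par.pes par.psb[unfolded One_nat_def])
next
  case (pder t t')
  then show ?case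
    by (auto split: option.split dest!: dest_plug_Bang_Some intro: par.pder par.pd)
next
  case (pdB t L M u u')
  from par_plug_Lam[OF pdB.IH(1)] pdB.IH(2) show ?case by auto
next
  case (psb t L N M M')
  from par_plug_Bang[OF psb.IH(1)] psb.IH(2) show ?case by auto
next
  case (pd t L N)
  from par_plug_Bang[OF pd.IH] show ?case by auto
qed (auto intro: par.intros)

lemma par_strong_confluent: "strong_confluentp par"
  by (rule strong_confluentpI) (blast intro: par_dev)

lemma step_imp_par: "step t u \<Longrightarrow> t \<Rrightarrow> u"
proof (induction rule: step.induct)
  case (root t u)
  then show ?case
    by (cases rule: root_step.cases)
      (auto intro: par.pdB par.psb[OF par_refl par_refl, unfolded One_nat_def] par.pd)
qed (auto intro: par.intros)

lemma rtranclp_map: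
  assumes "\<And>x y. r x y \<Longrightarrow> r (f x) (f y)" and "r\<^sup>*\<^sup>* x y"
  shows "r\<^sup>*\<^sup>* (f x) (f y)"
  using assms(2) by induction (auto intro: rtranclp.rtrancl_into_rtrancl assms(1))

lemma steps_App: "step\<^sup>*\<^sup>* t t' \<Longrightarrow> step\<^sup>*\<^sup>* u u' \<Longrightarrow> step\<^sup>*\<^sup>* (App t u) (App t' u')"
  using rtranclp_map[of step "\<lambda>x. App x u"] rtranclp_map[of step "App t'"]
  by (meson rtranclp_trans step.appL step.appR)

lemma steps_ES: "step\<^sup>*\<^sup>* t t' \<Longrightarrow> step\<^sup>*\<^sup>* u u' \<Longrightarrow> step\<^sup>*\<^sup>* (ES t u) (ES t' u')"
  using rtranclp_map[of step "\<lambda>x. ES x u"] rtranclp_map[of step "ES t'"]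
  by (meson rtranclp_trans step.esL step.esR)

lemma par_imp_steps: "t \<Rrightarrow> u \<Longrightarrow> step\<^sup>*\<^sup>* t u"
proof (induction rule: par.induct)
  case (pdB t L M u u')
  then show ?case
    by (meson steps_App root_step.dB step.root rtranclp.rtrancl_into_rtrancl)
next
  case (psb t L N M M')
  then show ?case
    by (meson steps_ES root_step.sbang step.root rtranclp.rtrancl_into_rtrancl)
next
  case (pd t L N)
  then show ?case
    by (meson rtranclp_map step.der root_step.dbang step.root rtranclp.rtrancl_into_rtrancl)
qed (auto intro: steps_App steps_ES rtranclp_map step.intros)

lemma step_confluent: "confluentp step"
proof -
  have "par\<^sup>*\<^sup>* = step\<^sup>*\<^sup>*"
    by (rule rtranclp_subset) (auto intro: step_imp_par par_imp_steps)
  then show ?thesis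
    using strong_confluentp_imp_confluentp[OF par_strong_confluent]
    by (metis confluentpD confluentpI)
qed

section \<open>Approximants\<close>

definition lam_headed :: "trm \<Rightarrow> bool" where
  "lam_headed t \<longleftrightarrow> (\<exists>L. t = plug L Bot) \<or> (\<exists>L M. t = plug L (Lam M))"

definition bang_headed :: "trm \<Rightarrow> bool" where
  "bang_headed t \<longleftrightarrow> (\<exists>L. t = plug L Bot) \<or> (\<exists>L M. t = plug L (Bang M))"

lemma forbidden_simps [simp]:
  "\<not> forbidden (Var i)" "\<not> forbidden Bot" "\<not> forbidden (Lam t)" "\<not> forbidden (Bang t)"
  "forbidden (App a b) \<longleftrightarrow> lam_headed a"
  "forbidden (ES a b) \<longleftrightarrow> bang_headed b"
  "forbidden (Der a) \<longleftrightarrow> bang_headed a"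
  unfolding forbidden_def lam_headed_def bang_headed_def by auto

lemma approximant_simps [simp]:
  "approximant (Var i)" "approximant Bot"
  "approximant (Lam t) \<longleftrightarrow> approximant t" "approximant (Bang t) \<longleftrightarrow> approximant t"
  "approximant (App a b) \<longleftrightarrow> \<not> lam_headed a \<and> approximant a \<and> approximant b"
  "approximant (ES a b) \<longleftrightarrow> \<not> bang_headed b \<and> approximant a \<and> approximant b"
  "approximant (Der a) \<longleftrightarrow> \<not> bang_headed a \<and> approximant a"
  unfolding approximant_def by auto

inductive_cases approx_le_VarE: "X \<sqsubseteq> Var i"
inductive_cases approx_le_BotE: "X \<sqsubseteq> Bot"
inductive_cases approx_le_LamE: "X \<sqsubseteq> Lam M"
inductive_cases approx_le_AppE: "X \<sqsubseteq> App a b"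
inductive_cases approx_le_ESE: "X \<sqsubseteq> ES a b"
inductive_cases approx_le_BangE: "X \<sqsubseteq> Bang M"
inductive_cases approx_le_DerE: "X \<sqsubseteq> Der a"
inductive_cases Lam_approx_leE: "Lam a \<sqsubseteq> C"
inductive_cases App_approx_leE: "App a b \<sqsubseteq> C"
inductive_cases ES_approx_leE: "ES a b \<sqsubseteq> C"
inductive_cases Bang_approx_leE: "Bang a \<sqsubseteq> C"
inductive_cases Der_approx_leE: "Der a \<sqsubseteq> C"

lemmas approx_le_elims =
  approx_le_VarE approx_le_BotE approx_le_LamE approx_le_AppE approx_le_ESE approx_le_BangE approx_le_DerE

lemma approx_le_refl [simp]: "A \<sqsubseteq> A"
  by (induction A) (auto intro: approx_le.intros)

lemma approx_le_trans: "A \<sqsubseteq> B \<Longrightarrow> B \<sqsubseteq> C \<Longrightarrow> A \<sqsubseteq> C"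
  by (induction arbitrary: C rule: approx_le.induct)
    (auto elim!: Lam_approx_leE App_approx_leE ES_approx_leE Bang_approx_leE Der_approx_leE
      intro: approx_le.intros)

lemma approx_le_plug:
  "X \<sqsubseteq> plug L H \<Longrightarrow> (\<exists>L'. X = plug L' Bot) \<or> (\<exists>L' Y. X = plug L' Y \<and> Y \<sqsubseteq> H)"
proof (induction L arbitrary: X)
  case Nil
  then show ?case by (metis plug.simps(1))
next
  case (Cons N L)
  from Cons.prems consider "X = Bot" | A A' where "X = ES A A'" "A \<sqsubseteq> plug L H"
    by (auto elim: approx_le_ESE)
  then show ?case
    by cases (metis plug.simps(1), metis Cons.IH plug.simps(2))
qed

lemma approx_le_lam_headed: "X \<sqsubseteq> plug L (Lam M) \<Longrightarrow> lam_headed X"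
  unfolding lam_headed_def by (metis approx_le_plug approx_le_LamE)

lemma approx_le_bang_headed: "X \<sqsubseteq> plug L (Bang M) \<Longrightarrow> bang_headed X"
  unfolding bang_headed_def by (metis approx_le_plug approx_le_BangE)

lemma approx_le_redex_eq_Bot: "root_step N N' \<Longrightarrow> approximant A \<Longrightarrow> A \<sqsubseteq> N \<Longrightarrow> A = Bot"
  by (induction rule: root_step.induct)
    (auto elim!: approx_le_AppE approx_le_ESE approx_le_DerE
      dest: approx_le_lam_headed approx_le_bang_headed)

lemma approx_le_step: "step N N' \<Longrightarrow> approximant A \<Longrightarrow> A \<sqsubseteq> N \<Longrightarrow> A \<sqsubseteq> N'"
proof (induction arbitrary: A rule: step.induct)
  case (root t u)
  then show ?case using approx_le_redex_eq_Bot approx_le.bot by blast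
qed (auto elim!: approx_le_elims intro: approx_le.intros)

lemma approx_le_steps: "step\<^sup>*\<^sup>* N N' \<Longrightarrow> approximant A \<Longrightarrow> A \<sqsubseteq> N \<Longrightarrow> A \<sqsubseteq> N'"
  by (induction rule: rtranclp_induct) (auto intro: approx_le_step)

fun join :: "trm \<Rightarrow> trm \<Rightarrow> trm" where
  "join Bot y = y"
| "join x Bot = x"
| "join (Lam a) (Lam b) = Lam (join a b)"
| "join (App a b) (App c d) = App (join a c) (join b d)"
| "join (ES a b) (ES c d) = ES (join a c) (join b d)"
| "join (Bang a) (Bang b) = Bang (join a b)"
| "join (Der a) (Der b) = Der (join a b)"
| "join x y = x"

lemma approx_le_join1: "A \<sqsubseteq> join A B"
  by (induction A B rule: join.induct) (auto intro: approx_le.intros)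

lemma approx_le_join2: "A \<sqsubseteq> N \<Longrightarrow> B \<sqsubseteq> N \<Longrightarrow> B \<sqsubseteq> join A B"
  by (induction N arbitrary: A B) (auto elim!: approx_le_elims intro!: approx_le.intros)

lemma join_approx_le: "A \<sqsubseteq> N \<Longrightarrow> B \<sqsubseteq> N \<Longrightarrow> join A B \<sqsubseteq> N"
  by (induction N arbitrary: A B) (auto elim!: approx_le_elims intro!: approx_le.intros)

lemma join_idem [simp]: "join A A = A"
  by (induction A) auto

lemma join_eq_Bot: "join X Y = Bot \<Longrightarrow> X = Bot"
  by (cases X; cases Y) auto

lemma join_eq_Lam: "join X Y = Lam M \<Longrightarrow> X = Bot \<or> (\<exists>M'. X = Lam M')"
  by (cases X; cases Y) auto

lemma join_eq_Bang: "join X Y = Bang M \<Longrightarrow> X = Bot \<or> (\<exists>M'. X = Bang M')"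
  by (cases X; cases Y) auto

lemma join_eq_ES: "join X Y = ES a b \<Longrightarrow> X = Bot \<or> (\<exists>a1 b1 a2. X = ES a1 b1 \<and> a = join a1 a2)"
  by (cases X; cases Y) (auto intro: exI[where x = a])

lemma join_eq_plug:
  "join X Y = plug L H \<Longrightarrow> \<exists>L' H1 H2. X = plug L' H1 \<and> (H1 = Bot \<or> H = join H1 H2)"
proof (induction L arbitrary: X Y)
  case Nil
  then show ?case by (metis plug.simps(1))
next
  case (Cons N L)
  then show ?case by (metis join_eq_ES plug.simps)
qed

lemma lam_headed_join: "lam_headed (join X Y) \<Longrightarrow> lam_headed X"
  unfolding lam_headed_def by (metis join_eq_plug join_eq_Bot join_eq_Lam)

lemma bang_headed_join: "bang_headed (join X Y) \<Longrightarrow> bang_headed X"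
  unfolding bang_headed_def by (metis join_eq_plug join_eq_Bot join_eq_Bang)

lemma approximant_join: "approximant A \<Longrightarrow> approximant B \<Longrightarrow> approximant (join A B)"
  by (induction A B rule: join.induct) (auto dest: lam_headed_join bang_headed_join)

theorem mainTheorem2:
  assumes "bot_free M"
  shows "(\<forall>A \<in> \<A> M. \<forall>B. approximant B \<and> B \<sqsubseteq> A \<longrightarrow> B \<in> \<A> M)
       \<and> (\<forall>A1 \<in> \<A> M. \<forall>A2 \<in> \<A> M. \<exists>A3 \<in> \<A> M. A1 \<sqsubseteq> A3 \<and> A2 \<sqsubseteq> A3)"
proof (intro conjI ballI allI impI)
  fix A B assume "A \<in> \<A> M" "approximant B \<and> B \<sqsubseteq> A"
  then show "B \<in> \<A> M" unfolding approximants_def by (auto intro: approx_le_trans)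
next
  fix A1 A2 assume "A1 \<in> \<A> M" "A2 \<in> \<A> M"
  then obtain N1 N2 where A1: "approximant A1" "step\<^sup>*\<^sup>* M N1" "A1 \<sqsubseteq> N1"
    and A2: "approximant A2" "step\<^sup>*\<^sup>* M N2" "A2 \<sqsubseteq> N2"
    unfolding approximants_def by auto
  from confluentpD[OF step_confluent A1(2) A2(2)]
  obtain N where "step\<^sup>*\<^sup>* N1 N" "step\<^sup>*\<^sup>* N2 N" by blast
  with A1 A2 have "step\<^sup>*\<^sup>* M N" "A1 \<sqsubseteq> N" "A2 \<sqsubseteq> N"
    by (auto intro: rtranclp_trans approx_le_steps)
  with A1(1) A2(1) have "join A1 A2 \<in> \<A> M"
    unfolding approximants_def by (auto intro: approximant_join join_approx_le)
  then show "\<exists>A3 \<in> \<A> M. A1 \<sqsubseteq> A3 \<and> A2 \<sqsubseteq> A3"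
    using approx_le_join1 approx_le_join2[OF \<open>A1 \<sqsubseteq> N\<close> \<open>A2 \<sqsubseteq> N\<close>] by blast
qed

end
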